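(* Let $k$ be a positive integer and $x$ an integer with $2\le x\le p^k-1$ (i.e. $x\in\mathbb{Z}_{p^k}\setminus\{0,1\}$). Let $N_x$ be the least period of the sequence $(T_n^i(x)\bmod p)_{i\ge 0}$, let $l_x$ be the multiplicative order modulo $p$ of the integer $T'_{n^{N_x}}(x)$, and let $$v=\max\{t : T_n^{N_x l_x}(x)\equiv x\pmod{p^t}\}.$$ If $k\ge v$, then the least period of the sequence $(T_n^i(x)\bmod p^k)_{i\ge0}$ equals $N_x\cdot l_x\cdot p^{k-v}$.
   Context: $p$ is a prime with $p>3$ and $n>1$ is an integer with $\gcd(n,p)=\gcd(n,p^2-1)=1$ (so $T_n$ permutes $\mathbb{Z}_{p^j}$ for all $j\ge1$). $T_d(x)\in\mathbb{Z}[x]$ is the Chebyshev polynomial of the first kind: $T_0=1$, $T_1=x$, $T_d=2xT_{d-1}-T_{d-2}$; $T'_d$ is its derivative. $T_n^i$ is the $i$-fold composition of $T_n$ ($T_n^0(x)=x$), computed over $\mathbb{Z}$; $T_n^i=T_{n^i}$. The least period of $(T_n^i(x)\bmod p^j)_{i\ge0}$ is the least positive integer $N$ with $T_n^N(x)\equiv x\pmod{p^j}$. *)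

theory Defs
  imports "HOL-Number_Theory.Number_Theory" "HOL-Computational_Algebra.Polynomial"
begin

fun cheb :: "nat \<Rightarrow> int poly" where
  "cheb 0 = 1"
| "cheb (Suc 0) = [:0, 1:]"
| "cheb (Suc (Suc d)) = [:0, 2:] * cheb (Suc d) - cheb d"

definition chebT :: "nat \<Rightarrow> int \<Rightarrow> int" where
  "chebT d x = poly (cheb d) x"

definition chebT' :: "nat \<Rightarrow> int \<Rightarrow> int" where
  "chebT' d x = poly (pderiv (cheb d)) x"

definition chebIter :: "nat \<Rightarrow> nat \<Rightarrow> int \<Rightarrow> int" where
  "chebIter n i x = ((chebT n) ^^ i) x"

definition least_period :: "nat \<Rightarrow> int \<Rightarrow> int \<Rightarrow> nat" where
  "least_period n m x = (LEAST N. 0 < N \<and> [chebIter n N x = x] (mod m))"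

end

theory Submission
  imports Defs
begin

text \<open>
  Only periodicity modulo p is special to Chebyshev polynomials, so the lifting argument is carried
  out for an arbitrary integer polynomial P with P^N(x) = x (mod p). Put Q = P^N and s = Q'(x). If
  p^w exactly divides Q(x) - x, a first order Taylor expansion gives
  Q^j(x) - x = (Q(x) - x)(1 + s + ... + s^(j-1)) (mod p^(w+1)),
  so modulo higher powers of p the orbit of Q can only return at multiples of l = ord_p(s), and
  R = Q^l has R'(x) = 1 (mod p). For such R the same expansion shows that R^r, for p not dividing
  r, keeps the exact power of p dividing R(x) - x, while a second order expansion together with
  p | 1 + 2 + ... + (p-1) and p | 1 + 4 + ... + (p-1)^2 (this needs p > 3) shows that R^p raises
  it by one. Hence p^k divides R^m(x) - x iff p^(k-v) divides m, and the period is N l p^(k-v).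

  Periodicity of Chebyshev orbits modulo p comes from T_m(x) = (z^m + z^-m)/2 where z + 1/z = 2x:
  Fermat's little theorem gives T_p(x) = x (mod p), which forces z^p = z or z^p = 1/z unless
  x = 1 or x = -1 (mod p). Either way z^(p^2-1) = 1, and since n is invertible modulo p^2 - 1,
  some T_n^i = T_(n^i) fixes x modulo p.
\<close>

section \<open>Orbits of integer polynomials modulo an integer\<close>

lemma poly_cong:
  fixes P :: "int poly"
  shows "[y = z] (mod q) \<Longrightarrow> [poly P y = poly P z] (mod q)"
  by (induction P) (auto intro: cong_add cong_mult)

definition poly_iter :: "'a::comm_semiring_1 poly \<Rightarrow> nat \<Rightarrow> 'a poly" where
  "poly_iter P j = (pcompose P ^^ j) [:0, 1:]"

lemma poly_iter_0 [simp]: "poly_iter P 0 = [:0, 1:]"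
  and poly_iter_Suc: "poly_iter P (Suc j) = pcompose P (poly_iter P j)"
  by (simp_all add: poly_iter_def)

lemma poly_poly_iter: "poly (poly_iter P j) = poly P ^^ j"
  by (induction j) (simp_all add: poly_iter_Suc poly_pcompose fun_eq_iff)

lemma funpow_poly_cong:
  fixes P :: "int poly"
  shows "[y = z] (mod q) \<Longrightarrow> [(poly P ^^ j) y = (poly P ^^ j) z] (mod q)"
  by (metis poly_cong poly_poly_iter)

lemma funpow_poly_return_shift:
  fixes P :: "int poly"
  assumes "[(poly P ^^ a) x = x] (mod q)"
  shows "[(poly P ^^ (b + a * j)) x = x] (mod q) \<longleftrightarrow> [(poly P ^^ b) x = x] (mod q)"
proof (induction j)
  case (Suc j)
  have "b + a * Suc j = (b + a * j) + a" by simp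
  then have "(poly P ^^ (b + a * Suc j)) x = (poly P ^^ (b + a * j)) ((poly P ^^ a) x)"
    by (simp only: funpow_add comp_apply)
  moreover have "[\<dots> = (poly P ^^ (b + a * j)) x] (mod q)"
    using assms by (rule funpow_poly_cong)
  ultimately show ?case
    using Suc by (metis cong_trans cong_sym)
qed simp

lemma pderiv_poly_iter_cong:
  fixes P :: "int poly"
  assumes "[poly P x = x] (mod q)"
  shows "[poly (pderiv (poly_iter P j)) x = poly (pderiv P) x ^ j] (mod q)"
proof (induction j)
  case 0
  then show ?case by (simp add: pderiv_pCons)
next
  case (Suc j)
  have "[(poly P ^^ j) x = x] (mod q)"
    using funpow_poly_return_shift[where a=1 and b=0] assms by simp
  then have "[poly (pderiv P) ((poly P ^^ j) x) = poly (pderiv P) x] (mod q)"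
    by (rule poly_cong)
  then show ?case
    using Suc by (simp add: poly_iter_Suc pderiv_pcompose poly_pcompose poly_poly_iter cong_mult)
qed

lemma pderiv_poly_iter_cong_one:
  fixes P :: "int poly"
  assumes "[poly P x = x] (mod q)" and "[poly (pderiv P) x = 1] (mod q)"
  shows "[poly (pderiv (poly_iter P j)) x = 1] (mod q)"
proof -
  have "[poly (pderiv P) x ^ j = 1 ^ j] (mod q)" using assms(2) by (rule cong_pow)
  then show ?thesis using pderiv_poly_iter_cong[OF assms(1), of j] by (simp add: cong_trans)
qed

definition poly_period :: "int poly \<Rightarrow> int \<Rightarrow> int \<Rightarrow> nat" where
  "poly_period P q x = (LEAST N. 0 < N \<and> [(poly P ^^ N) x = x] (mod q))"

lemma poly_period_dvd_iff:
  fixes P :: "int poly"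
  assumes "\<exists>N>0. [(poly P ^^ N) x = x] (mod q)"
  shows "poly_period P q x > 0"
    and "[(poly P ^^ m) x = x] (mod q) \<longleftrightarrow> poly_period P q x dvd m"
proof -
  define L where "L = poly_period P q x"
  have L: "0 < L" "[(poly P ^^ L) x = x] (mod q)"
    using LeastI_ex[OF assms] unfolding L_def poly_period_def by auto
  have min: "\<not> [(poly P ^^ r) x = x] (mod q)" if "0 < r" "r < L" for r
    using that not_less_Least unfolding L_def poly_period_def by blast
  have "[(poly P ^^ m) x = x] (mod q) \<longleftrightarrow> [(poly P ^^ (m mod L)) x = x] (mod q)"
    using funpow_poly_return_shift[OF L(2), of "m mod L" "m div L"] by simp
  also have "\<dots> \<longleftrightarrow> m mod L = 0"
    using min[of "m mod L"] L(1) by (cases "m mod L = 0") auto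
  finally show "[(poly P ^^ m) x = x] (mod q) \<longleftrightarrow> L dvd m"
    by (simp add: dvd_eq_mod_eq_0)
  show "L > 0" by (fact L(1))
qed

lemma poly_period_eqI:
  fixes P :: "int poly"
  assumes "M > 0" and "\<And>m. [(poly P ^^ m) x = x] (mod q) \<longleftrightarrow> M dvd m"
  shows "poly_period P q x = M"
  unfolding poly_period_def
  by (rule Least_equality) (use assms in \<open>auto dest: dvd_imp_le\<close>)

lemma ord_int_dvd_iff:
  fixes m :: nat and a :: int
  assumes "m > 1"
  shows "[a ^ j = 1] (mod int m) \<longleftrightarrow> ord (int m) a dvd j"
proof -
  define b where "b = nat (a mod int m)"
  have ib: "int b = a mod int m" unfolding b_def using assms by simp
  have pow: "[a ^ k = 1] (mod int m) \<longleftrightarrow> [b ^ k = 1] (mod m)" for k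
  proof -
    have "[a ^ k = 1] (mod int m) \<longleftrightarrow> [int b ^ k = int 1] (mod int m)"
      unfolding ib by (simp add: cong_def power_mod)
    also have "\<dots> \<longleftrightarrow> [b ^ k = 1] (mod m)" by (metis cong_int_iff of_nat_power)
    finally show ?thesis .
  qed
  have "coprime (int m) a \<longleftrightarrow> coprime (int m) (a mod int m)" using assms by simp
  also have "\<dots> \<longleftrightarrow> coprime m b" unfolding ib[symmetric] by simp
  finally have "ord (int m) a = ord m b" unfolding ord_def pow by simp
  then show ?thesis unfolding pow by (simp add: ord_divides')
qed

section \<open>Taylor expansion and exact divisibility\<close>

lemma poly_taylor2:
  fixes P :: "'a::idom poly"
  obtains c where
    "\<And>y. (y - x) ^ 3 dvd poly P y - poly P x - poly (pderiv P) x * (y - x) - c * (y - x)\<^sup>2"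
proof -
  define Q where "Q = pcompose P [:x, 1:]"
  obtain a0 a1 a2 R where Q: "Q = pCons a0 (pCons a1 (pCons a2 R))"
    by (metis pCons_cases)
  have PQ: "poly P y = poly Q (y - x)" for y
    unfolding Q_def by (simp add: poly_pcompose)
  have a0: "poly P x = a0" using PQ[of x] unfolding Q by simp
  have "poly (pderiv P) x = poly (pderiv Q) 0"
    unfolding Q_def by (simp add: pderiv_pcompose poly_pcompose pderiv_pCons)
  then have a1: "poly (pderiv P) x = a1" unfolding Q by (simp add: pderiv_pCons)
  show ?thesis
  proof (rule that[of a2])
    fix y
    have "poly P y - poly P x - poly (pderiv P) x * (y - x) - a2 * (y - x)\<^sup>2
        = (y - x) ^ 3 * poly R (y - x)"
      unfolding PQ[of y] a0 a1 Q by (simp add: algebra_simps power2_eq_square power3_eq_cube)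
    then show "(y - x) ^ 3 dvd poly P y - poly P x - poly (pderiv P) x * (y - x) - a2 * (y - x)\<^sup>2"
      by simp
  qed
qed

lemma poly_taylor1:
  fixes P :: "'a::idom poly"
  shows "(y - x)\<^sup>2 dvd poly P y - poly P x - poly (pderiv P) x * (y - x)"
proof -
  obtain c where "(y - x) ^ 3 dvd poly P y - poly P x - poly (pderiv P) x * (y - x) - c * (y - x)\<^sup>2"
    using poly_taylor2 by blast
  moreover have "(y - x)\<^sup>2 dvd (y - x) ^ 3" by (simp add: le_imp_power_dvd)
  ultimately have "(y - x)\<^sup>2 dvd
      (poly P y - poly P x - poly (pderiv P) x * (y - x) - c * (y - x)\<^sup>2) + c * (y - x)\<^sup>2"
    by (meson dvd_add dvd_trans dvd_triv_right)
  then show ?thesis by simp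
qed

definition exactly_dvd :: "'a::comm_semiring_1 \<Rightarrow> nat \<Rightarrow> 'a \<Rightarrow> bool" where
  "exactly_dvd q w d \<longleftrightarrow> q ^ w dvd d \<and> \<not> q ^ Suc w dvd d"

lemma exactly_dvd_power_dvd_iff:
  assumes "exactly_dvd q w d"
  shows "q ^ k dvd d \<longleftrightarrow> k \<le> w"
proof
  show "k \<le> w" if "q ^ k dvd d"
  proof (rule ccontr)
    assume "\<not> k \<le> w"
    then have "q ^ Suc w dvd q ^ k" by (intro le_imp_power_dvd) simp
    then show False using that assms unfolding exactly_dvd_def by (meson dvd_trans)
  qed
  show "q ^ k dvd d" if "k \<le> w"
    using that assms unfolding exactly_dvd_def by (meson dvd_trans le_imp_power_dvd)
qed

lemma exactly_dvd_pos_iff_cong: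
  fixes q a b :: int
  shows "exactly_dvd q v (a - b) \<Longrightarrow> 1 \<le> v \<longleftrightarrow> [a = b] (mod q)"
  using exactly_dvd_power_dvd_iff[of q v "a - b" 1] by (simp add: cong_iff_dvd_diff)

lemma exactly_dvd_multiplicity:
  "d \<noteq> 0 \<Longrightarrow> \<not> is_unit q \<Longrightarrow> exactly_dvd q (multiplicity q d) d"
  using power_dvd_iff_le_multiplicity[of d q "Suc (multiplicity q d)"]
  unfolding exactly_dvd_def by (simp add: multiplicity_dvd)

lemma exactly_dvd_cong:
  fixes a b q :: int
  assumes "[a = b] (mod q ^ Suc w)"
  shows "exactly_dvd q w a \<longleftrightarrow> exactly_dvd q w b"
proof -
  have "[a = b] (mod q ^ w)" using assms by (rule cong_dvd_modulus) (simp add: le_imp_power_dvd)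
  then show ?thesis using assms unfolding exactly_dvd_def by (metis cong_dvd_iff)
qed

lemma exactly_dvd_mult_coprime:
  fixes p d r :: int
  assumes "prime p" "exactly_dvd p w d" "\<not> p dvd r"
  shows "exactly_dvd p w (d * r)"
proof -
  have "coprime (p ^ Suc w) r" using assms(1,3) by (simp add: prime_imp_coprime)
  then show ?thesis
    using assms(2) unfolding exactly_dvd_def by (simp add: coprime_dvd_mult_left_iff)
qed

lemma exactly_dvd_mult_self:
  fixes p d :: "'a::idom"
  assumes "p \<noteq> 0" "exactly_dvd p w d"
  shows "exactly_dvd p (Suc w) (p * d)"
  using assms unfolding exactly_dvd_def by simp

section \<open>Lifting periods to prime powers\<close>

lemma funpow_poly_first_order:
  fixes P :: "int poly" and q x :: int
  defines "d \<equiv> poly P x - x" and "\<rho> \<equiv> poly (pderiv P) x"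
  assumes w: "1 \<le> w" and d: "q ^ w dvd d"
  shows "[(poly P ^^ j) x - x = d * (\<Sum>i<j. \<rho> ^ i)] (mod q ^ Suc w)"
proof (induction j)
  case (Suc j)
  define e where "e = (poly P ^^ j) x - x"
  have IH: "[e = d * (\<Sum>i<j. \<rho> ^ i)] (mod q ^ Suc w)" using Suc unfolding e_def .
  then have "[e = d * (\<Sum>i<j. \<rho> ^ i)] (mod q ^ w)"
    by (rule cong_dvd_modulus) (simp add: le_imp_power_dvd)
  then have "q ^ w dvd e" using d by (simp add: cong_dvd_iff)
  then have "q ^ (w + w) dvd e\<^sup>2" by (simp add: power_add power2_eq_square mult_dvd_mono)
  moreover have "q ^ Suc w dvd q ^ (w + w)" using w by (intro le_imp_power_dvd) simp
  moreover have "e\<^sup>2 dvd (poly P ^^ Suc j) x - poly P x - \<rho> * e"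
    using poly_taylor1[of "(poly P ^^ j) x" x P] unfolding e_def \<rho>_def by simp
  ultimately have rem: "q ^ Suc w dvd (poly P ^^ Suc j) x - poly P x - \<rho> * e"
    by (meson dvd_trans)
  have "(poly P ^^ Suc j) x - x - (d + \<rho> * e) = (poly P ^^ Suc j) x - poly P x - \<rho> * e"
    unfolding d_def by simp
  then have "[(poly P ^^ Suc j) x - x = d + \<rho> * e] (mod q ^ Suc w)"
    unfolding cong_iff_dvd_diff using rem by (simp only:)
  also have "[d + \<rho> * e = d + \<rho> * (d * (\<Sum>i<j. \<rho> ^ i))] (mod q ^ Suc w)"
    using IH by (intro cong_add cong_mult cong_refl)
  also have "d + \<rho> * (d * (\<Sum>i<j. \<rho> ^ i)) = d * (\<Sum>i<Suc j. \<rho> ^ i)"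
    by (simp add: sum.lessThan_Suc_shift sum_distrib_left algebra_simps del: sum.lessThan_Suc)
  finally show ?case .
qed simp

lemma funpow_poly_second_order:
  fixes P :: "int poly" and q x c \<mu> :: int
  defines "d \<equiv> poly P x - x" and "\<rho> \<equiv> poly (pderiv P) x"
  assumes w: "1 \<le> w" and d: "q ^ w dvd d" and \<mu>: "\<rho> = 1 + q * \<mu>"
    and c: "\<And>y. (y - x) ^ 3 dvd poly P y - poly P x - \<rho> * (y - x) - c * (y - x)\<^sup>2"
  shows "[(poly P ^^ j) x - x
          = int j * d + q * \<mu> * d * (\<Sum>i<j. int i) + c * d\<^sup>2 * (\<Sum>i<j. int i ^ 2)] (mod q ^ (w + 2))"
proof (induction j)
  case (Suc j)
  define e where "e = (poly P ^^ j) x - x"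
  define E where "E = int j * d + q * \<mu> * d * (\<Sum>i<j. int i) + c * d\<^sup>2 * (\<Sum>i<j. int i ^ 2)"
  define r where "r = (poly P ^^ Suc j) x - x - d - \<rho> * e - c * e\<^sup>2"
  have IH: "q ^ (w + 2) dvd e - E" using Suc unfolding e_def E_def by (simp add: cong_iff_dvd_diff)
  obtain a where a: "d = q ^ w * a" using d by blast
  have pow: "q ^ Suc w dvd q ^ (w + 2)" "q ^ Suc w dvd q ^ (w + w)"
    "q ^ (w + 2) dvd q ^ (w + w + 1)" "q ^ (w + 2) dvd q ^ (w + w + w)"
    by (rule le_imp_power_dvd, use w in simp)+
  have "q ^ Suc w dvd e - E" using pow(1) IH by (rule dvd_trans)
  moreover have "e - int j * d = (e - E) + q ^ Suc w * (\<mu> * a * (\<Sum>i<j. int i))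
      + q ^ (w + w) * (c * a\<^sup>2 * (\<Sum>i<j. int i ^ 2))"
    unfolding E_def a by (simp add: power_add power2_eq_square algebra_simps)
  ultimately have "q ^ Suc w dvd e - int j * d"
    by (metis dvd_add dvd_triv_left dvd_mult2 pow(2))
  then obtain t where t: "e = int j * d + q ^ Suc w * t"
    by (metis add.commute diff_add_cancel dvd_def)
  have "e = q ^ w * (int j * a + q * t)" unfolding t a by (simp add: algebra_simps)
  then have "q ^ (w + w + w) dvd e ^ 3" by (simp add: power_add power3_eq_cube mult_dvd_mono)
  moreover have "e ^ 3 dvd r"
    using c[of "(poly P ^^ j) x"] unfolding r_def e_def d_def by (simp add: algebra_simps)
  ultimately have "q ^ (w + 2) dvd r" using pow(4) by (meson dvd_trans)
  moreover have "(poly P ^^ Suc j) x - x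
      - (int (Suc j) * d + q * \<mu> * d * (\<Sum>i<Suc j. int i) + c * d\<^sup>2 * (\<Sum>i<Suc j. int i ^ 2))
      = r + (e - E) + q ^ (w + 2) * (\<mu> * t) + q ^ (w + w + 1) * (c * t * (2 * int j * a + q * t))"
  proof -
    have "(poly P ^^ Suc j) x - x = r + d + \<rho> * e + c * e\<^sup>2" unfolding r_def by simp
    then show ?thesis
      unfolding E_def \<mu> by (simp add: t a power_add power2_eq_square algebra_simps)
  qed
  moreover have "q ^ (w + 2) dvd q ^ (w + w + 1) * (c * t * (2 * int j * a + q * t))"
    using pow(3) by (rule dvd_mult2)
  ultimately show ?case
    unfolding cong_iff_dvd_diff using IH by simp
qed simp

lemma prime_dvd_sums_lessThan:
  fixes p :: nat
  assumes p: "prime p" "p > 3"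
  shows "int p dvd (\<Sum>i<p. int i)" and "int p dvd (\<Sum>i<p. int i ^ 2)"
proof -
  have sums: "2 * (\<Sum>i<j. int i) = int j * (int j - 1)"
    "6 * (\<Sum>i<j. int i ^ 2) = int j * (int j - 1) * (2 * int j - 1)" for j
    by (induction j) (simp_all add: algebra_simps power2_eq_square)
  have q: "prime (int p)" using p(1) by simp
  have "\<not> int p dvd 2" "\<not> int p dvd 3"
    using p(2) by (auto dest!: zdvd_imp_le)
  moreover have "int p dvd 2 * (\<Sum>i<p. int i)" "int p dvd 2 * (3 * (\<Sum>i<p. int i ^ 2))"
    using sums[of p] by simp_all
  ultimately show "int p dvd (\<Sum>i<p. int i)" "int p dvd (\<Sum>i<p. int i ^ 2)"
    using q by (metis prime_dvd_mult_iff)+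
qed

lemma funpow_poly_lift_prime:
  fixes P :: "int poly" and p :: nat and x :: int
  assumes p: "prime p" "p > 3" and w: "1 \<le> w"
    and d: "exactly_dvd (int p) w (poly P x - x)"
    and \<rho>: "[poly (pderiv P) x = 1] (mod int p)"
  shows "exactly_dvd (int p) (Suc w) ((poly P ^^ p) x - x)"
proof -
  define q d where "q = int p" and "d = poly P x - x"
  obtain c where c:
    "\<And>y. (y - x) ^ 3 dvd poly P y - poly P x - poly (pderiv P) x * (y - x) - c * (y - x)\<^sup>2"
    using poly_taylor2 by blast
  obtain \<mu> where \<mu>: "poly (pderiv P) x = 1 + q * \<mu>"
    using \<rho> unfolding q_def cong_iff_dvd_diff by (metis add.commute diff_add_cancel dvd_def)
  obtain a where a: "d = q ^ w * a" using d unfolding exactly_dvd_def q_def d_def by blast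
  obtain s1 s2 where s: "(\<Sum>i<p. int i) = q * s1" "(\<Sum>i<p. int i ^ 2) = q * s2"
    using prime_dvd_sums_lessThan[OF p] unfolding q_def by (meson dvd_def)
  have "[(poly P ^^ p) x - x = int p * d + q * \<mu> * d * (\<Sum>i<p. int i) + c * d\<^sup>2 * (\<Sum>i<p. int i ^ 2)]
      (mod q ^ (w + 2))"
    using funpow_poly_second_order[OF w _ \<mu> c] d unfolding exactly_dvd_def q_def d_def by blast
  also have "int p * d + q * \<mu> * d * (\<Sum>i<p. int i) + c * d\<^sup>2 * (\<Sum>i<p. int i ^ 2)
      = q * d + (q ^ (w + 2) * (\<mu> * a * s1) + q ^ (w + w + 1) * (c * a\<^sup>2 * s2))"
    unfolding s a q_def by (simp add: power_add power2_eq_square algebra_simps)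
  also have "[\<dots> = q * d] (mod q ^ (w + 2))"
  proof -
    have "q ^ (w + 2) dvd q ^ (w + w + 1)" by (rule le_imp_power_dvd) (use w in simp)
    then show ?thesis
      unfolding cong_iff_dvd_diff add_diff_cancel_left' by (intro dvd_add dvd_triv_left dvd_mult2)
  qed
  finally have "[(poly P ^^ p) x - x = q * d] (mod q ^ Suc (Suc w))" by simp
  moreover have "exactly_dvd q (Suc w) (q * d)"
    using d p(1) unfolding q_def d_def by (intro exactly_dvd_mult_self) auto
  ultimately show ?thesis unfolding q_def by (simp add: exactly_dvd_cong)
qed

lemma funpow_poly_exactly_dvd_coprime:
  fixes P :: "int poly" and p :: nat and x :: int
  assumes p: "prime p" and w: "1 \<le> w"
    and d: "exactly_dvd (int p) w (poly P x - x)"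
    and \<rho>: "[poly (pderiv P) x = 1] (mod int p)" and r: "\<not> p dvd r"
  shows "exactly_dvd (int p) w ((poly P ^^ r) x - x)"
proof -
  define q d \<rho> where "q = int p" and "d = poly P x - x" and "\<rho> = poly (pderiv P) x"
  define S where "S = (\<Sum>i<r. \<rho> ^ i)"
  have "[(poly P ^^ r) x - x = d * S] (mod q ^ Suc w)"
    using funpow_poly_first_order[OF w] d unfolding exactly_dvd_def q_def d_def S_def \<rho>_def by blast
  moreover have "[d * S = d * int r] (mod q ^ Suc w)"
  proof -
    have "[S = (\<Sum>i<r. 1)] (mod q)"
      unfolding S_def using \<rho> unfolding q_def \<rho>_def by (intro cong_sum) (metis cong_pow power_one)
    then have "q dvd S - int r" by (simp add: cong_iff_dvd_diff)
    moreover have "q ^ w dvd d" using d unfolding exactly_dvd_def q_def d_def by blast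
    ultimately have "q ^ w * q dvd d * (S - int r)" by (rule mult_dvd_mono[rotated])
    then show ?thesis by (simp add: cong_iff_dvd_diff right_diff_distrib mult.commute)
  qed
  moreover have "exactly_dvd q w (d * int r)"
    using p d r unfolding q_def d_def by (intro exactly_dvd_mult_coprime) auto
  ultimately show ?thesis
    unfolding q_def by (metis exactly_dvd_cong cong_trans)
qed

lemma funpow_poly_ord_dvd_iff:
  fixes P :: "int poly" and p :: nat and x :: int
  assumes p: "prime p" and w: "1 \<le> w"
    and d: "exactly_dvd (int p) w (poly P x - x)"
    and \<rho>: "\<not> [poly (pderiv P) x = 1] (mod int p)"
  shows "int p ^ Suc w dvd (poly P ^^ j) x - x \<longleftrightarrow> ord (int p) (poly (pderiv P) x) dvd j"
proof -
  define q d \<rho> where "q = int p" and "d = poly P x - x" and "\<rho> = poly (pderiv P) x"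
  define S where "S = (\<Sum>i<j. \<rho> ^ i)"
  have q: "prime q" using p unfolding q_def by simp
  have dw: "exactly_dvd q w d" using d unfolding q_def d_def .
  have "[(poly P ^^ j) x - x = d * S] (mod q ^ Suc w)"
    using funpow_poly_first_order[OF w] dw unfolding exactly_dvd_def d_def S_def \<rho>_def by blast
  then have "q ^ Suc w dvd (poly P ^^ j) x - x \<longleftrightarrow> q ^ Suc w dvd d * S"
    by (rule cong_dvd_iff)
  also have "\<dots> \<longleftrightarrow> q dvd S"
  proof
    assume "q dvd S"
    moreover have "q ^ w dvd d" using dw unfolding exactly_dvd_def by blast
    ultimately show "q ^ Suc w dvd d * S" by (simp add: mult_dvd_mono mult.commute)
  next
    assume "q ^ Suc w dvd d * S"
    then show "q dvd S"
      using exactly_dvd_mult_coprime[OF q dw] unfolding exactly_dvd_def by blast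
  qed
  also have "\<dots> \<longleftrightarrow> q dvd \<rho> ^ j - 1"
    using \<rho> q unfolding power_diff_1_eq S_def \<rho>_def q_def
    by (simp add: prime_dvd_mult_iff cong_iff_dvd_diff)
  also have "\<dots> \<longleftrightarrow> ord q \<rho> dvd j"
    using ord_int_dvd_iff[of p \<rho> j] prime_gt_1_nat[OF p] unfolding q_def
    by (simp add: cong_iff_dvd_diff)
  finally show ?thesis unfolding q_def d_def \<rho>_def .
qed

lemma funpow_poly_lift_prime_power:
  fixes P :: "int poly" and p :: nat and x :: int
  assumes p: "prime p" "p > 3" and v: "1 \<le> v"
    and d: "exactly_dvd (int p) v (poly P x - x)"
    and \<rho>: "[poly (pderiv P) x = 1] (mod int p)"
  shows "exactly_dvd (int p) (v + e) ((poly P ^^ p ^ e) x - x)"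
proof (induction e)
  case (Suc e)
  define Q where "Q = poly_iter P (p ^ e)"
  have "[poly P x = x] (mod int p)"
    using exactly_dvd_pos_iff_cong[OF d] v by simp
  then have "[poly (pderiv Q) x = 1] (mod int p)"
    unfolding Q_def using \<rho> by (rule pderiv_poly_iter_cong_one)
  then have "exactly_dvd (int p) (Suc (v + e)) ((poly Q ^^ p) x - x)"
    using funpow_poly_lift_prime[OF p _ Suc[folded poly_poly_iter, folded Q_def]] v by simp
  moreover have "poly Q ^^ p = poly P ^^ p ^ Suc e"
    by (simp only: Q_def poly_poly_iter funpow_mult power_Suc2)
  ultimately show ?case by simp
qed (use d in simp)

lemma funpow_poly_returns_prime_power:
  fixes P :: "int poly" and p :: nat and x :: int
  assumes p: "prime p" "p > 3" and v: "1 \<le> v" "v \<le> k"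
    and d: "exactly_dvd (int p) v (poly P x - x)"
    and \<rho>: "[poly (pderiv P) x = 1] (mod int p)"
  shows "int p ^ k dvd (poly P ^^ m) x - x \<longleftrightarrow> p ^ (k - v) dvd m"
proof (cases "m = 0")
  case False
  have "\<not> is_unit p" using p(1) not_prime_unit by blast
  then obtain r where r: "m = p ^ multiplicity p m * r" "\<not> p dvd r"
    using multiplicity_decompose'[OF False] by metis
  define e Q where "e = multiplicity p m" and "Q = poly_iter P (p ^ e)"
  have "[poly P x = x] (mod int p)"
    using exactly_dvd_pos_iff_cong[OF d] v(1) by simp
  then have "[poly (pderiv Q) x = 1] (mod int p)"
    unfolding Q_def using \<rho> by (rule pderiv_poly_iter_cong_one)
  moreover have "exactly_dvd (int p) (v + e) (poly Q x - x)"
    using funpow_poly_lift_prime_power[OF p v(1) d \<rho>] unfolding Q_def poly_poly_iter .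
  ultimately have "exactly_dvd (int p) (v + e) ((poly Q ^^ r) x - x)"
    using funpow_poly_exactly_dvd_coprime[OF p(1) _ _ _ r(2)] v(1) by simp
  moreover have "poly Q ^^ r = poly P ^^ m"
    unfolding Q_def poly_poly_iter funpow_mult e_def r(1)[symmetric] ..
  ultimately have "int p ^ k dvd (poly P ^^ m) x - x \<longleftrightarrow> k \<le> v + e"
    by (simp add: exactly_dvd_power_dvd_iff)
  also have "\<dots> \<longleftrightarrow> p ^ (k - v) dvd m"
    using power_dvd_iff_le_multiplicity[OF False \<open>\<not> is_unit p\<close>] v(2) unfolding e_def
    by (simp; arith)
  finally show ?thesis .
qed simp

lemma ord_dvd_of_return_prime_power:
  fixes Q :: "int poly" and p :: nat and x :: int
  defines "l \<equiv> ord (int p) (poly (pderiv Q) x)"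
  assumes p: "prime p" and fixed: "[poly Q x = x] (mod int p)"
    and v: "exactly_dvd (int p) v ((poly Q ^^ l) x - x)" "v \<le> k"
    and m: "int p ^ k dvd (poly Q ^^ m) x - x"
  shows "l dvd m"
proof (cases "[poly (pderiv Q) x = 1] (mod int p)")
  case True
  then have "l dvd 1"
    using ord_int_dvd_iff[of p _ 1] prime_gt_1_nat[OF p] unfolding l_def by simp
  then show ?thesis by simp
next
  case False
  have "\<not> is_unit (int p)" using p not_prime_unit by auto
  have "poly Q x \<noteq> x"
  proof
    assume "poly Q x = x"
    then have "(poly Q ^^ l) x = x" by (induction l) simp_all
    then show False using v(1) unfolding exactly_dvd_def by simp
  qed
  then have dw: "exactly_dvd (int p) (multiplicity (int p) (poly Q x - x)) (poly Q x - x)"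
    using \<open>\<not> is_unit (int p)\<close> by (intro exactly_dvd_multiplicity) simp_all
  define w where "w = multiplicity (int p) (poly Q x - x)"
  have w: "1 \<le> w"
    using exactly_dvd_pos_iff_cong[OF dw] fixed unfolding w_def by simp
  note ord_iff = funpow_poly_ord_dvd_iff[OF p w dw[folded w_def] False]
  have "int p ^ Suc w dvd (poly Q ^^ l) x - x" using ord_iff[of l] unfolding l_def by simp
  then have "Suc w \<le> v" using exactly_dvd_power_dvd_iff[OF v(1)] by blast
  then have "int p ^ Suc w dvd int p ^ k" using v(2) by (intro le_imp_power_dvd) simp
  then have "int p ^ Suc w dvd (poly Q ^^ m) x - x" using m by (rule dvd_trans)
  then show ?thesis using ord_iff unfolding l_def by simp
qed

lemma funpow_poly_returns_fixed_mod_prime: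
  fixes Q :: "int poly" and p :: nat and x :: int
  defines "l \<equiv> ord (int p) (poly (pderiv Q) x)"
  assumes p: "prime p" "p > 3" and fixed: "[poly Q x = x] (mod int p)"
    and v: "exactly_dvd (int p) v ((poly Q ^^ l) x - x)" "v \<le> k"
  shows "int p ^ k dvd (poly Q ^^ m) x - x \<longleftrightarrow> l * p ^ (k - v) dvd m"
proof -
  define R where "R = poly_iter Q l"
  have poly_R: "poly R ^^ j = poly Q ^^ (l * j)" for j
    unfolding R_def poly_poly_iter funpow_mult ..
  have "[(poly Q ^^ l) x = x] (mod int p)"
    using funpow_poly_return_shift[where a=1 and b=0] fixed by simp
  then have v1: "1 \<le> v"
    using exactly_dvd_pos_iff_cong[OF v(1)] by simp
  have "[poly (pderiv Q) x ^ l = 1] (mod int p)"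
    using ord_int_dvd_iff[of p "poly (pderiv Q) x" l] prime_gt_1_nat[OF p(1)]
    unfolding l_def by simp
  then have \<rho>_R: "[poly (pderiv R) x = 1] (mod int p)"
    using pderiv_poly_iter_cong[OF fixed, of l] unfolding R_def by (rule cong_trans[rotated])
  have d_R: "exactly_dvd (int p) v (poly R x - x)"
    using v(1) poly_R[of 1] by simp
  note returns_R = funpow_poly_returns_prime_power[OF p v1 v(2) d_R \<rho>_R]
  show ?thesis
  proof
    assume h: "int p ^ k dvd (poly Q ^^ m) x - x"
    then have "l dvd m"
      using ord_dvd_of_return_prime_power[OF p(1) fixed v[unfolded l_def]] unfolding l_def by simp
    then obtain j where j: "m = l * j" by blast
    then have "p ^ (k - v) dvd j" using h returns_R unfolding poly_R by simp
    then show "l * p ^ (k - v) dvd m" unfolding j by simp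
  next
    assume "l * p ^ (k - v) dvd m"
    then obtain j where "m = l * p ^ (k - v) * j" by (rule dvdE)
    then show "int p ^ k dvd (poly Q ^^ m) x - x"
      using returns_R[of "p ^ (k - v) * j"] unfolding poly_R by (simp add: mult.assoc)
  qed
qed

theorem poly_period_prime_power:
  fixes P :: "int poly" and p k v :: nat and x :: int
  defines "N \<equiv> poly_period P (int p) x"
  defines "l \<equiv> ord (int p) (poly (pderiv (poly_iter P N)) x)"
  assumes p: "prime p" "p > 3"
    and periodic: "\<exists>M>0. [(poly P ^^ M) x = x] (mod int p)"
    and v: "exactly_dvd (int p) v ((poly P ^^ (N * l)) x - x)" "v \<le> k"
  shows "poly_period P (int p ^ k) x = N * l * p ^ (k - v)"
proof (rule poly_period_eqI)
  define Q where "Q = poly_iter P N"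
  have N: "N > 0" and ret_p: "\<And>m. [(poly P ^^ m) x = x] (mod int p) \<longleftrightarrow> N dvd m"
    using poly_period_dvd_iff[OF periodic] unfolding N_def by blast+
  have poly_Q: "poly Q ^^ j = poly P ^^ (N * j)" for j
    unfolding Q_def poly_poly_iter funpow_mult ..
  have l: "l = ord (int p) (poly (pderiv Q) x)" unfolding l_def Q_def ..
  have "[poly Q x = x] (mod int p)"
    using ret_p[of N] poly_Q[of 1] by simp
  moreover have "exactly_dvd (int p) v ((poly Q ^^ l) x - x)"
    using v(1) poly_Q by simp
  ultimately have returns_Q: "int p ^ k dvd (poly Q ^^ j) x - x \<longleftrightarrow> l * p ^ (k - v) dvd j" for j
    using funpow_poly_returns_fixed_mod_prime[OF p _ _ v(2)] unfolding l by blast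
  have "l > 0"
    using v(1) unfolding exactly_dvd_def by (cases l) auto
  then show "N * l * p ^ (k - v) > 0" using N p(1) by (simp add: prime_gt_0_nat)
  have "1 \<le> v"
    using ret_p[of "N * l"] exactly_dvd_pos_iff_cong[OF v(1)] by simp
  then have "int p dvd int p ^ k" using v(2) by simp
  show "[(poly P ^^ m) x = x] (mod int p ^ k) \<longleftrightarrow> N * l * p ^ (k - v) dvd m" for m
  proof
    assume h: "[(poly P ^^ m) x = x] (mod int p ^ k)"
    then have "N dvd m"
      using ret_p cong_dvd_modulus[OF h \<open>int p dvd int p ^ k\<close>] by blast
    then obtain j where "m = N * j" by blast
    then show "N * l * p ^ (k - v) dvd m"
      using h returns_Q[of j] by (simp add: poly_Q cong_iff_dvd_diff mult.assoc)
  next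
    assume "N * l * p ^ (k - v) dvd m"
    then obtain j where "m = N * l * p ^ (k - v) * j" by (rule dvdE)
    then show "[(poly P ^^ m) x = x] (mod int p ^ k)"
      using returns_Q[of "l * p ^ (k - v) * j"] by (simp add: poly_Q cong_iff_dvd_diff mult.assoc)
  qed
qed

section \<open>Chebyshev polynomials\<close>

lemma chebT_0 [simp]: "chebT 0 y = 1"
  and chebT_1 [simp]: "chebT (Suc 0) y = y"
  and chebT_Suc_Suc: "chebT (Suc (Suc m)) y = 2 * y * chebT (Suc m) y - chebT m y"
  by (simp_all add: chebT_def)

lemma chebT_eq_poly: "chebT n = poly (cheb n)"
  by (simp add: fun_eq_iff chebT_def)

lemma chebIter_eq_funpow: "chebIter n i = poly (cheb n) ^^ i"
  by (simp add: fun_eq_iff chebIter_def chebT_eq_poly)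

lemma least_period_eq_poly_period: "least_period n q x = poly_period (cheb n) q x"
  unfolding least_period_def poly_period_def chebIter_eq_funpow ..

lemma chebT_binet:
  fixes y :: int and s :: complex
  assumes s: "s\<^sup>2 = of_int y ^ 2 - 1"
  shows "2 * of_int (chebT m y) = (of_int y + s) ^ m + (of_int y - s) ^ m"
proof (induction m rule: cheb.induct)
  case (3 m)
  have rec: "Z ^ Suc (Suc m) = 2 * of_int y * Z ^ Suc m - Z ^ m"
    if "Z\<^sup>2 = 2 * of_int y * Z - 1" for Z :: complex
  proof -
    have "Z ^ m * Z\<^sup>2 = Z ^ m * (2 * of_int y * Z - 1)" using that by simp
    then show ?thesis by (simp add: power2_eq_square algebra_simps)
  qed
  have "(of_int y + s)\<^sup>2 = 2 * of_int y * (of_int y + s) - 1"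
    and "(of_int y - s)\<^sup>2 = 2 * of_int y * (of_int y - s) - 1"
    using s by (simp_all add: power2_eq_square algebra_simps)
  note rec = this[THEN rec]
  have "2 * of_int (chebT (Suc (Suc m)) y)
      = 2 * of_int y * (2 * of_int (chebT (Suc m) y)) - 2 * (of_int (chebT m y) :: complex)"
    by (simp add: chebT_Suc_Suc algebra_simps)
  also have "\<dots> = 2 * of_int y * ((of_int y + s) ^ Suc m + (of_int y - s) ^ Suc m)
      - ((of_int y + s) ^ m + (of_int y - s) ^ m)"
    using 3 by simp
  also have "\<dots> = (of_int y + s) ^ Suc (Suc m) + (of_int y - s) ^ Suc (Suc m)"
    unfolding rec by (simp add: algebra_simps)
  finally show ?case .
qed simp_all

lemma chebT_chebT: "chebT a (chebT b y) = chebT (a * b) y"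
proof -
  define s :: complex where "s = csqrt (of_int y ^ 2 - 1)"
  define u v where "u = of_int y + s" and "v = of_int y - s"
  have s2: "s\<^sup>2 = of_int y ^ 2 - 1" unfolding s_def by simp
  have "u * v = 1" using s2 unfolding u_def v_def by (simp add: power2_eq_square algebra_simps)
  then have uv: "u ^ b * v ^ b = 1" by (metis power_mult_distrib power_one)
  define U V where "U = u ^ b" and "V = v ^ b"
  have Y: "of_int (chebT b y) = (U + V) / 2"
    using chebT_binet[OF s2, of b] unfolding U_def V_def u_def v_def
    by (simp add: eq_divide_eq mult.commute)
  define S where "S = (U - V) / 2"
  have "S\<^sup>2 = ((U + V) / 2)\<^sup>2 - U * V"
    unfolding S_def by (simp add: power2_eq_square field_simps)
  then have "S\<^sup>2 = of_int (chebT b y) ^ 2 - 1"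
    unfolding Y U_def V_def uv by simp
  then have "2 * of_int (chebT a (chebT b y))
      = (of_int (chebT b y) + S) ^ a + (of_int (chebT b y) - S) ^ a"
    by (rule chebT_binet)
  also have "\<dots> = U ^ a + V ^ a"
    unfolding Y S_def by (simp add: field_simps)
  also have "\<dots> = u ^ (a * b) + v ^ (a * b)"
    unfolding U_def V_def by (simp add: power_mult mult.commute[of a])
  also have "\<dots> = 2 * of_int (chebT (a * b) y)"
    using chebT_binet[OF s2, of "a * b"] unfolding u_def v_def by simp
  finally show ?thesis by simp
qed

lemma cheb_mult: "cheb (a * b) = pcompose (cheb a) (cheb b)"
  by (simp add: poly_eq_poly_eq_iff[symmetric] poly_pcompose fun_eq_iff
      chebT_chebT[unfolded chebT_def])

lemma cheb_power: "cheb (n ^ j) = poly_iter (cheb n) j"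
  by (induction j) (simp_all add: poly_iter_Suc cheb_mult)

lemma chebIter_eq_chebT: "chebIter n i y = chebT (n ^ i) y"
  unfolding chebIter_def by (induction i) (simp_all add: chebT_chebT)

lemma chebT_one: "chebT m 1 = 1"
  by (induction m rule: cheb.induct) (simp_all add: chebT_Suc_Suc)

lemma chebT_minus_one: "chebT m (-1) = (-1) ^ m"
  by (induction m rule: cheb.induct) (simp_all add: chebT_Suc_Suc)

lemma chebT_binomial:
  fixes y :: int
  shows "2 * chebT m y = (\<Sum>k\<le>m. int (m choose k)
           * (if even k then 2 * (y\<^sup>2 - 1) ^ (k div 2) else 0) * y ^ (m - k))"
proof -
  define s where "s = csqrt (of_int (y\<^sup>2 - 1))"
  have s: "s\<^sup>2 = of_int y ^ 2 - 1" unfolding s_def by simp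
  have sk: "s ^ k + (- s) ^ k = of_int (if even k then 2 * (y\<^sup>2 - 1) ^ (k div 2) else 0)" for k
  proof (cases "even k")
    case True
    then obtain j where k: "k = 2 * j" by blast
    have "s ^ k = (s\<^sup>2) ^ j" unfolding k by (simp add: power_mult)
    then show ?thesis using True s k by simp
  qed simp
  have "of_int (2 * chebT m y) = (s + of_int y) ^ m + (- s + of_int y) ^ m"
    using chebT_binet[OF s, of m] by (simp add: algebra_simps)
  also have "\<dots> = (\<Sum>k\<le>m. of_nat (m choose k) * (s ^ k + (- s) ^ k) * of_int y ^ (m - k))"
    unfolding binomial_ring by (simp add: sum.distrib[symmetric] algebra_simps)
  also have "\<dots> = of_int (\<Sum>k\<le>m. int (m choose k)
      * (if even k then 2 * (y\<^sup>2 - 1) ^ (k div 2) else 0) * y ^ (m - k))"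
    unfolding sk by simp
  finally show ?thesis by (simp only: of_int_eq_iff)
qed

lemma chebT_prime_cong:
  fixes y :: int
  assumes p: "prime p" "odd p"
  shows "[chebT p y = y ^ p] (mod int p)"
proof -
  define f where
    "f k = int (p choose k) * (if even k then 2 * (y\<^sup>2 - 1) ^ (k div 2) else 0) * y ^ (p - k)" for k
  have "{..p} = insert 0 {1..p}" by auto
  then have sum: "2 * (chebT p y - y ^ p) = (\<Sum>k\<in>{1..p}. f k)"
    unfolding right_diff_distrib chebT_binomial f_def by simp
  have "int p dvd f k" if "k \<in> {1..p}" for k
  proof (cases "k = p")
    case True
    then show ?thesis using p(2) by (simp add: f_def)
  next
    case False
    then have "p dvd (p choose k)" using that p by (intro dvd_choose_prime) auto
    then have "int p dvd int (p choose k)" by (simp only: int_dvd_int_iff)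
    then show ?thesis unfolding f_def by (simp add: mult.assoc)
  qed
  then have "int p dvd 2 * (chebT p y - y ^ p)"
    unfolding sum by (rule dvd_sum)
  moreover have "\<not> p dvd 2"
    using p primes_dvd_imp_eq[of p 2] by auto
  then have "\<not> int p dvd 2"
    by (metis int_dvd_int_iff of_nat_numeral)
  moreover have "prime (int p)" using p(1) by simp
  ultimately have "int p dvd chebT p y - y ^ p" by (metis prime_dvd_mult_iff)
  then show ?thesis by (simp add: cong_iff_dvd_diff)
qed

lemma fermat_int:
  fixes y :: int
  assumes p: "prime p"
  shows "[y ^ p = y] (mod int p)"
proof -
  define a where "a = nat (y mod int p)"
  have ya: "int a = y mod int p" unfolding a_def using p prime_gt_0_nat by simp
  have "[a ^ p = a] (mod p)"
  proof (cases "p dvd a")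
    case True
    moreover have "p dvd a ^ p" using True p by (meson dvd_power dvd_trans prime_gt_0_nat)
    ultimately show ?thesis by (simp add: cong_def)
  next
    case False
    have "[a ^ (p - 1) * a = 1 * a] (mod p)"
      using fermat_theorem[OF p False] by (rule cong_scalar_right)
    then show ?thesis using p by (simp flip: power_Suc2 add: prime_gt_0_nat)
  qed
  then have "[(y mod int p) ^ p = y mod int p] (mod int p)"
    unfolding ya[symmetric] by (metis cong_int_iff of_nat_power)
  then show ?thesis by (simp add: cong_def power_mod)
qed

section \<open>Chebyshev orbits are periodic modulo p\<close>

text \<open>A pair (a, b) stands for a + b z in Z[z]/(z^2 - 2 y z + 1), where z + 1/z = 2y:
  zpow y m is z^m and zmult y is the ring multiplication.\<close>

fun zpow :: "int \<Rightarrow> nat \<Rightarrow> int \<times> int" where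
  "zpow y 0 = (1, 0)"
| "zpow y (Suc m) = (- snd (zpow y m), fst (zpow y m) + 2 * y * snd (zpow y m))"

definition zmult :: "int \<Rightarrow> int \<times> int \<Rightarrow> int \<times> int \<Rightarrow> int \<times> int" where
  "zmult y u v =
    (fst u * fst v - snd u * snd v, fst u * snd v + snd u * fst v + 2 * y * snd u * snd v)"

definition zcong :: "int \<Rightarrow> int \<times> int \<Rightarrow> int \<times> int \<Rightarrow> bool" where
  "zcong q u v \<longleftrightarrow> [fst u = fst v] (mod q) \<and> [snd u = snd v] (mod q)"

lemma zpow_add: "zpow y (m + k) = zmult y (zpow y m) (zpow y k)"
  by (induction k) (simp_all add: zmult_def algebra_simps)

lemma chebT_zpow: "chebT m y = fst (zpow y m) + y * snd (zpow y m)"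
proof (induction m rule: cheb.induct)
  case (3 m)
  show ?case
    by (simp only: chebT_Suc_Suc 3 zpow.simps fst_conv snd_conv) (simp add: algebra_simps)
qed simp_all

lemma zpow_norm:
  "fst (zpow y m) ^ 2 + 2 * y * fst (zpow y m) * snd (zpow y m) + snd (zpow y m) ^ 2 = 1"
  by (induction m) (simp_all add: algebra_simps power2_eq_square)

lemma zmult_cong_left: "zcong q u u' \<Longrightarrow> zcong q (zmult y u v) (zmult y u' v)"
  unfolding zcong_def zmult_def by (auto intro!: cong_add cong_diff cong_mult)

lemma zpow_cong_periodic:
  assumes "zcong q (zpow y (1 + K)) (zpow y 1)"
  shows "zcong q (zpow y (1 + j * K)) (zpow y 1)"
proof (induction j)
  case (Suc j)
  have "1 + Suc j * K = (1 + K) + j * K" by simp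
  then have "zpow y (1 + Suc j * K) = zmult y (zpow y (1 + K)) (zpow y (j * K))"
    by (simp only: zpow_add)
  moreover have "zmult y (zpow y 1) (zpow y (j * K)) = zpow y (1 + j * K)"
    by (rule zpow_add[symmetric])
  ultimately show ?case
    using zmult_cong_left[OF assms, of y "zpow y (j * K)"] Suc
    unfolding zcong_def by (auto intro: cong_trans)
qed (simp add: zcong_def)

lemma chebT_period_of_zpow:
  assumes z: "zcong q (zpow y (1 + K)) (zpow y 1)"
    and M: "K dvd M" "M > 1" "coprime n M"
  shows "\<exists>i>0. [chebT (n ^ i) y = y] (mod q)"
proof -
  have "n \<noteq> 0" using M(2,3) by (metis coprime_0_left_iff nat_dvd_1_iff_1 less_irrefl_nat)
  have "[n ^ totient M = 1] (mod M)" using euler_theorem M(3) by (simp add: coprime_commute)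
  then have "[n ^ totient M = 1] (mod K)" using M(1) by (rule cong_dvd_modulus_nat)
  then obtain j where "n ^ totient M = j * K + 1"
    using cong_le_nat[of 1 "n ^ totient M"] \<open>n \<noteq> 0\<close> by auto
  then have "zcong q (zpow y (n ^ totient M)) (zpow y 1)"
    using zpow_cong_periodic[OF z] by simp
  then have "[fst (zpow y (n ^ totient M)) + y * snd (zpow y (n ^ totient M)) = 0 + y * 1] (mod q)"
    unfolding zcong_def by (intro cong_add cong_mult cong_refl) simp_all
  then have "[chebT (n ^ totient M) y = y] (mod q)"
    by (simp add: chebT_zpow)
  then show ?thesis using M(2) by (auto intro!: exI[of _ "totient M"])
qed

lemma zpow_prime_cases:
  fixes p :: nat and x :: int
  assumes p: "prime p" "odd p"
  obtains "zcong (int p) (zpow x (1 + (p - 1))) (zpow x 1)"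
    | "zcong (int p) (zpow x (1 + (p + 1))) (zpow x 1)"
    | "[x = 1] (mod int p)"
    | "[x = -1] (mod int p)"
proof -
  define q a b where "q = int p" and "a = fst (zpow x p)" and "b = snd (zpow x p)"
  have "[chebT p x = x] (mod q)"
    using chebT_prime_cong[OF p] fermat_int[OF p(1)] unfolding q_def by (rule cong_trans)
  then have fixed: "q dvd a + x * b - x"
    unfolding chebT_zpow a_def b_def by (simp add: cong_iff_dvd_diff)
  \<comment> \<open>z^p has norm 1 and trace 2 T_p(x) = 2x (mod p), so it is z or 1/z unless x^2 = 1 (mod p).\<close>
  have "(1 - b) * (1 + b) * ((x - 1) * (x + 1))
      = (a\<^sup>2 + 2 * x * a * b + b\<^sup>2 - 1) + (a + x * b - x) * - (a + x * b + x)"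
    by (simp add: algebra_simps power2_eq_square)
  then have "q dvd (1 - b) * (1 + b) * ((x - 1) * (x + 1))"
    using fixed zpow_norm[of x p] unfolding a_def[symmetric] b_def[symmetric]
    by (simp add: dvd_mult2)
  moreover have "prime q" using p unfolding q_def by simp
  ultimately consider "q dvd 1 - b" | "q dvd 1 + b" | "q dvd x - 1" | "q dvd x + 1"
    by (metis prime_dvd_mult_iff)
  then show ?thesis
  proof cases
    case 1
    have "a = (a + x * b - x) + x * (1 - b)" by (simp add: algebra_simps)
    then have "q dvd a" using fixed 1 by (metis dvd_add dvd_mult)
    then show ?thesis
      using that(1) 1 p(1) prime_gt_0_nat unfolding zcong_def a_def b_def q_def
      by (simp add: cong_iff_dvd_diff dvd_diff_commute)
  next
    case 2
    have "a - 2 * x = (a + x * b - x) - x * (1 + b)" by (simp add: algebra_simps)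
    then have "q dvd a - 2 * x" using fixed 2 by (metis dvd_diff dvd_mult)
    then have "zcong q (zpow x p) (2 * x, -1)"
      using 2 unfolding zcong_def a_def b_def by (simp add: cong_iff_dvd_diff add.commute)
    then have "zcong q (zmult x (zpow x p) (zpow x 2)) (zmult x (2 * x, -1) (zpow x 2))"
      by (rule zmult_cong_left)
    moreover have "zmult x (2 * x, -1) (zpow x 2) = zpow x 1"
      by (simp add: zmult_def numeral_2_eq_2 algebra_simps)
    ultimately show ?thesis
      using that(2) unfolding q_def by (simp flip: zpow_add)
  next
    case 3
    then show ?thesis using that(3) unfolding q_def by (simp add: cong_iff_dvd_diff)
  next
    case 4
    then show ?thesis using that(4) unfolding q_def by (simp add: cong_iff_dvd_diff)
  qed
qed

lemma chebT_cong_fixed_one: "[x = 1] (mod q) \<Longrightarrow> [chebT n x = x] (mod q)"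
  using poly_cong[of x 1 q "cheb n"] chebT_one[of n]
  unfolding chebT_def by (metis cong_sym cong_trans)

lemma chebT_cong_fixed_minus_one: "odd n \<Longrightarrow> [x = -1] (mod q) \<Longrightarrow> [chebT n x = x] (mod q)"
  using poly_cong[of x "-1" q "cheb n"] chebT_minus_one[of n]
  unfolding chebT_def by (metis cong_sym cong_trans power_minus_odd power_one)

lemma chebIter_periodic_mod_prime:
  fixes p n :: nat and x :: int
  assumes p: "prime p" "odd p" and n: "coprime n (p\<^sup>2 - 1)"
  shows "\<exists>N>0. [chebIter n N x = x] (mod int p)"
proof -
  have "p \<noteq> 2" using p(2) by auto
  then have "p \<ge> 3" using prime_ge_2_nat[OF p(1)] by linarith
  then have "3 * 3 \<le> p * p" by (intro mult_le_mono)
  then have M: "p\<^sup>2 - 1 > 1" by (simp add: power2_eq_square)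
  have factors: "p\<^sup>2 - 1 = (p - 1) * (p + 1)"
    by (cases p) (simp_all add: power2_eq_square)
  have K: "p - 1 dvd p\<^sup>2 - 1" "p + 1 dvd p\<^sup>2 - 1"
    unfolding factors by (rule dvd_triv_left, rule dvd_triv_right)
  have "odd n"
  proof
    assume "even n"
    moreover have "even (p\<^sup>2 - 1)" using p(2) by simp
    ultimately show False using n by (metis coprime_common_divisor odd_one)
  qed
  have "\<exists>i>0. [chebT (n ^ i) x = x] (mod int p)"
  proof (cases rule: zpow_prime_cases[OF p, of x])
    case 1
    then show ?thesis using chebT_period_of_zpow K(1) M n by blast
  next
    case 2
    then show ?thesis using chebT_period_of_zpow K(2) M n by blast
  next
    case 3
    then show ?thesis using chebT_cong_fixed_one[of x "int p" n] by (intro exI[of _ 1]) simp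
  next
    case 4
    then show ?thesis
      using chebT_cong_fixed_minus_one[OF \<open>odd n\<close>, of x "int p"] by (intro exI[of _ 1]) simp
  qed
  then show ?thesis by (simp add: chebIter_eq_chebT)
qed

theorem theorem1:
  fixes p n k v :: nat and x :: int
  assumes "prime p" and "p > 3" and "n > 1"
    and "coprime n p" and "coprime n (p^2 - 1)"
    and "k > 0" and "2 \<le> x" and "x \<le> int p ^ k - 1"
    and "[chebIter n (least_period n (int p) x * ord (int p) (chebT' (n ^ least_period n (int p) x) x)) x = x]
           (mod (int p ^ v))"
    and "\<forall>t. [chebIter n (least_period n (int p) x * ord (int p) (chebT' (n ^ least_period n (int p) x) x)) x = x]
           (mod (int p ^ t)) \<longrightarrow> t \<le> v"
    and "k \<ge> v"
  shows "least_period n (int p ^ k) x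
           = least_period n (int p) x * ord (int p) (chebT' (n ^ least_period n (int p) x) x) * p ^ (k - v)"
proof -
  define N where "N = poly_period (cheb n) (int p) x"
  define l where "l = ord (int p) (poly (pderiv (poly_iter (cheb n) N)) x)"
  have chebT': "chebT' (n ^ j) x = poly (pderiv (poly_iter (cheb n) j)) x" for j
    by (simp add: chebT'_def cheb_power)
  have "odd p" using assms(1,2) prime_odd_nat by fastforce
  then have "\<exists>M>0. [(poly (cheb n) ^^ M) x = x] (mod int p)"
    using chebIter_periodic_mod_prime[OF assms(1) _ assms(5)] by (simp add: chebIter_eq_funpow)
  moreover have "exactly_dvd (int p) v ((poly (cheb n) ^^ (N * l)) x - x)"
    using assms(9) assms(10)[rule_format, of "Suc v"]
    unfolding exactly_dvd_def N_def l_def least_period_eq_poly_period chebT' chebIter_eq_funpow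
    by (auto simp: cong_iff_dvd_diff)
  ultimately have "poly_period (cheb n) (int p ^ k) x = N * l * p ^ (k - v)"
    using poly_period_prime_power[OF assms(1,2) _ _ assms(11)] unfolding N_def l_def by blast
  then show ?thesis unfolding N_def l_def least_period_eq_poly_period chebT' .
qed

end
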